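(* Let $G=(V,E)$ be a finite planar embedded graph, $\mathbf{p}$ a packing of $G$, $V=V^+\sqcup V^-\sqcup V^=\sqcup V^0$ a partition, and $\mathbf{p}'$ a nontrivial proper infinitesimal flex. Then exactly one of the following holds: (1) $\mathbf{p}'$ is extendable; (2) there exists an equilibrium stress $\omega$ blocking $\mathbf{p}'$.
   Context: A packing of $G=(V,E)$, $V=\{1,\dots,n\}$, is $\mathbf{p}=(x_1,y_1,r_1,\dots,x_n,y_n,r_n)\in\mathbb{R}^{3n}$, all $r_i>0$, with $(r_i+r_j)^2=(x_i-x_j)^2+(y_i-y_j)^2$ for all $(i,j)\in E$ and the neighbors of each vertex in the same counterclockwise order as in the embedding; $\mathbf{p}_i=(x_i,y_i)$. Partition: $V^+$ (radius may increase or stay), $V^-$ (may decrease or stay), $V^=$ (fixed), $V^0$ (free). An infinitesimal flex is $\mathbf{p}'$ with $(\mathbf{p}_i-\mathbf{p}_j)\cdot(\mathbf{p}_i'-\mathbf{p}_j')=(r_i+r_j)(r_i'+r_j')$ for all edges; proper if $r_i'\ge 0$ on $V^+$, $\le0$ on $V^-$, $=0$ on $V^=$; trivial if it is the derivative of a family of rigid motions (rotations/translations of centers, radii unchanged). For proper $\mathbf{p}'$, the modified partition is $\tilde V^+=\{i\in V^+:r_i'=0\}$, $\tilde V^-=\{i\in V^-:r_i'=0\}$, $\tilde V^==V^=$, $\tilde V^0$ the rest. $\mathbf{p}'$ is extendable if there is $\mathbf{p}''\in\mathbb{R}^{3n}$ with $(\mathbf{p}_i-\mathbf{p}_j)\cdot(\mathbf{p}_i''-\mathbf{p}_j'')-(r_i+r_j)(r_i''+r_j'')=(r_i'+r_j')^2-(\mathbf{p}_i'-\mathbf{p}_j')\cdot(\mathbf{p}_i'-\mathbf{p}_j')$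 for all $(i,j)\in E$, and $r_i''\ge0$ on $\tilde V^+$, $\le 0$ on $\tilde V^-$, $=0$ on $\tilde V^=$. A stress $\omega:E\to\mathbb{R}$ is an equilibrium stress if $\sum_{j:(i,j)\in E}\omega_{ij}(\mathbf{p}_i-\mathbf{p}_j)=0$ for all $i$; its radial force sum is $\omega_i=\sum_{j:(i,j)\in E}\omega_{ij}(r_i+r_j)$. An equilibrium stress $\omega$ blocks $\mathbf{p}'$ if $\omega_i\ge 0$ for $i\in\tilde V^-$, $\omega_i\le0$ for $i\in\tilde V^+$, $\omega_i=0$ for $i\in\tilde V^0$, and $\sum_{(i,j)\in E}\omega_{ij}[(\mathbf{p}_i'-\mathbf{p}_j')\cdot(\mathbf{p}_i'-\mathbf{p}_j')-(r_i'+r_j')^2]>0$. *)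

theory Defs
  imports Complex_Main
begin

text \<open>Vertices are 1..n. Undirected edges are stored once each as ordered pairs (i,j) in E.
Centres of discs are complex numbers (points of R^2), radii are reals.\<close>

definition adj :: "(nat \<times> nat) set \<Rightarrow> nat \<Rightarrow> nat \<Rightarrow> bool" where
  "adj E i j \<longleftrightarrow> (i, j) \<in> E \<or> (j, i) \<in> E"

definition nbrs :: "(nat \<times> nat) set \<Rightarrow> nat \<Rightarrow> nat set" where
  "nbrs E i = {j. adj E i j}"

definition simple_graph :: "nat \<Rightarrow> (nat \<times> nat) set \<Rightarrow> bool" where
  "simple_graph n E \<longleftrightarrow> E \<subseteq> {1..n} \<times> {1..n} \<and> (\<forall>i. (i, i) \<notin> E)
     \<and> (\<forall>i j. (i, j) \<in> E \<longrightarrow> (j, i) \<notin> E)"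

text \<open>Combinatorial embedding: rotation system (counterclockwise cyclic order of neighbours).\<close>
definition rotation_system :: "nat \<Rightarrow> (nat \<times> nat) set \<Rightarrow> (nat \<Rightarrow> nat list) \<Rightarrow> bool" where
  "rotation_system n E rot \<longleftrightarrow> (\<forall>i\<in>{1..n}. distinct (rot i) \<and> set (rot i) = nbrs E i)"

definition rot_succ :: "(nat \<Rightarrow> nat list) \<Rightarrow> nat \<Rightarrow> nat \<Rightarrow> nat" where
  "rot_succ rot v u = (let xs = rot v; k = (THE k. k < length xs \<and> xs ! k = u)
                       in xs ! ((k + 1) mod length xs))"

definition face_next :: "(nat \<Rightarrow> nat list) \<Rightarrow> nat \<times> nat \<Rightarrow> nat \<times> nat" where
  "face_next rot d = (snd d, rot_succ rot (snd d) (fst d))"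

definition darts :: "(nat \<times> nat) set \<Rightarrow> (nat \<times> nat) set" where
  "darts E = {(a, b). adj E a b}"

text \<open>Faces = orbits of the face-tracing permutation on darts, plus one face per isolated vertex.\<close>
definition num_faces :: "nat \<Rightarrow> (nat \<times> nat) set \<Rightarrow> (nat \<Rightarrow> nat list) \<Rightarrow> nat" where
  "num_faces n E rot = card (darts E // {(d, e). \<exists>k. (face_next rot ^^ k) d = e})
     + card {v \<in> {1..n}. nbrs E v = {}}"

definition num_components :: "nat \<Rightarrow> (nat \<times> nat) set \<Rightarrow> nat" where
  "num_components n E = card ({1..n} // ({(a, b). adj E a b}\<^sup>*))"

text \<open>A planar embedded graph: simple graph with a rotation system of genus 0 (Euler formula
  V - E + F = 2C, each component embedded in the sphere).\<close>
definition planar_embedded :: "nat \<Rightarrow> (nat \<times> nat) set \<Rightarrow> (nat \<Rightarrow> nat list) \<Rightarrow> bool" where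
  "planar_embedded n E rot \<longleftrightarrow> simple_graph n E \<and> rotation_system n E rot \<and>
     int n - int (card E) + int (num_faces n E rot) = 2 * int (num_components n E)"

definition ccw_ordered :: "complex list \<Rightarrow> bool" where
  "ccw_ordered ds \<longleftrightarrow> (\<exists>\<theta>::nat \<Rightarrow> real.
      (\<forall>m < length ds. ds ! m = complex_of_real (cmod (ds ! m)) * cis (\<theta> m))
    \<and> (\<forall>m. Suc m < length ds \<longrightarrow> \<theta> m < \<theta> (Suc m))
    \<and> (0 < length ds \<longrightarrow> \<theta> (length ds - 1) < \<theta> 0 + 2 * pi))"

definition dot2 :: "complex \<Rightarrow> complex \<Rightarrow> real" where
  "dot2 a b = Re a * Re b + Im a * Im b"

definition packing :: "nat \<Rightarrow> (nat \<times> nat) set \<Rightarrow> (nat \<Rightarrow> nat list) \<Rightarrow>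
    (nat \<Rightarrow> complex) \<Rightarrow> (nat \<Rightarrow> real) \<Rightarrow> bool" where
  "packing n E rot z r \<longleftrightarrow> (\<forall>i\<in>{1..n}. r i > 0)
     \<and> (\<forall>(i, j)\<in>E. (r i + r j)^2 = (Re (z i) - Re (z j))^2 + (Im (z i) - Im (z j))^2)
     \<and> (\<forall>i\<in>{1..n}. ccw_ordered (map (\<lambda>j. z j - z i) (rot i)))"

definition vpartition :: "nat \<Rightarrow> nat set \<Rightarrow> nat set \<Rightarrow> nat set \<Rightarrow> nat set \<Rightarrow> bool" where
  "vpartition n Vp Vm Veq V0 \<longleftrightarrow> Vp \<union> Vm \<union> Veq \<union> V0 = {1..n}
     \<and> Vp \<inter> Vm = {} \<and> Vp \<inter> Veq = {} \<and> Vp \<inter> V0 = {}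
     \<and> Vm \<inter> Veq = {} \<and> Vm \<inter> V0 = {} \<and> Veq \<inter> V0 = {}"

definition inf_flex :: "(nat \<times> nat) set \<Rightarrow> (nat \<Rightarrow> complex) \<Rightarrow> (nat \<Rightarrow> real) \<Rightarrow>
    (nat \<Rightarrow> complex) \<Rightarrow> (nat \<Rightarrow> real) \<Rightarrow> bool" where
  "inf_flex E z r z' r' \<longleftrightarrow>
     (\<forall>(i, j)\<in>E. dot2 (z i - z j) (z' i - z' j) = (r i + r j) * (r' i + r' j))"

definition proper_signs :: "nat set \<Rightarrow> nat set \<Rightarrow> nat set \<Rightarrow> (nat \<Rightarrow> real) \<Rightarrow> bool" where
  "proper_signs Vp Vm Veq r' \<longleftrightarrow> (\<forall>i\<in>Vp. r' i \<ge> 0) \<and> (\<forall>i\<in>Vm. r' i \<le> 0) \<and> (\<forall>i\<in>Veq. r' i = 0)"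

definition trivial_flex :: "nat \<Rightarrow> (nat \<Rightarrow> complex) \<Rightarrow> (nat \<Rightarrow> complex) \<Rightarrow> (nat \<Rightarrow> real) \<Rightarrow> bool" where
  "trivial_flex n z z' r' \<longleftrightarrow> (\<exists>(\<theta>::real \<Rightarrow> real) (\<tau>::real \<Rightarrow> complex).
      \<theta> 0 = 0 \<and> \<tau> 0 = 0 \<and>
      (\<forall>i\<in>{1..n}. ((\<lambda>t. cis (\<theta> t) * z i + \<tau> t) has_vector_derivative z' i) (at 0) \<and> r' i = 0))"

definition extendable :: "nat \<Rightarrow> (nat \<times> nat) set \<Rightarrow> nat set \<Rightarrow> nat set \<Rightarrow> nat set \<Rightarrow>
    (nat \<Rightarrow> complex) \<Rightarrow> (nat \<Rightarrow> real) \<Rightarrow> (nat \<Rightarrow> complex) \<Rightarrow> (nat \<Rightarrow> real) \<Rightarrow> bool" where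
  "extendable n E Vp Vm Veq z r z' r' \<longleftrightarrow> (\<exists>(z''::nat \<Rightarrow> complex) (r''::nat \<Rightarrow> real).
      (\<forall>(i, j)\<in>E. dot2 (z i - z j) (z'' i - z'' j) - (r i + r j) * (r'' i + r'' j)
                  = (r' i + r' j)^2 - dot2 (z' i - z' j) (z' i - z' j))
    \<and> proper_signs {i\<in>Vp. r' i = 0} {i\<in>Vm. r' i = 0} Veq r'')"

definition edge_weight :: "(nat \<times> nat) set \<Rightarrow> (nat \<times> nat \<Rightarrow> real) \<Rightarrow> nat \<Rightarrow> nat \<Rightarrow> real" where
  "edge_weight E \<omega> i j = (if (i, j) \<in> E then \<omega> (i, j) else \<omega> (j, i))"

definition equilibrium_stress :: "nat \<Rightarrow> (nat \<times> nat) set \<Rightarrow> (nat \<Rightarrow> complex) \<Rightarrow>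
    (nat \<times> nat \<Rightarrow> real) \<Rightarrow> bool" where
  "equilibrium_stress n E z \<omega> \<longleftrightarrow>
     (\<forall>i\<in>{1..n}. (\<Sum>j\<in>nbrs E i. complex_of_real (edge_weight E \<omega> i j) * (z i - z j)) = 0)"

definition radial_sum :: "(nat \<times> nat) set \<Rightarrow> (nat \<Rightarrow> real) \<Rightarrow> (nat \<times> nat \<Rightarrow> real) \<Rightarrow> nat \<Rightarrow> real" where
  "radial_sum E r \<omega> i = (\<Sum>j\<in>nbrs E i. edge_weight E \<omega> i j * (r i + r j))"

definition blocks :: "nat \<Rightarrow> (nat \<times> nat) set \<Rightarrow> nat set \<Rightarrow> nat set \<Rightarrow> nat set \<Rightarrow>
    (nat \<Rightarrow> complex) \<Rightarrow> (nat \<Rightarrow> real) \<Rightarrow> (nat \<Rightarrow> complex) \<Rightarrow> (nat \<Rightarrow> real) \<Rightarrow>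
    (nat \<times> nat \<Rightarrow> real) \<Rightarrow> bool" where
  "blocks n E Vp Vm Veq z r z' r' \<omega> \<longleftrightarrow>
     (let tVp = {i\<in>Vp. r' i = 0}; tVm = {i\<in>Vm. r' i = 0}; tV0 = {1..n} - (tVp \<union> tVm \<union> Veq) in
     equilibrium_stress n E z \<omega>
     \<and> (\<forall>i\<in>tVm. radial_sum E r \<omega> i \<ge> 0)
     \<and> (\<forall>i\<in>tVp. radial_sum E r \<omega> i \<le> 0)
     \<and> (\<forall>i\<in>tV0. radial_sum E r \<omega> i = 0)
     \<and> (\<Sum>(i, j)\<in>E. \<omega> (i, j) * (dot2 (z' i - z' j) (z' i - z' j) - (r' i + r' j)^2)) > 0)"

end

theory Submission
  imports Defs
begin

text \<open>Both alternatives are linear in the unknowns. Extendability asks whether a linear system in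
  the second-order data (p'', r'') is solvable: one equation per edge, with sign constraints on the
  radii of the vertices in the modified classes. Multiplying the edge equations by a stress \<omega> and
  summing, the coefficient of the centre of i is the equilibrium sum at i and the coefficient of
  r''_i is minus the radial force sum \<omega>_i; so a blocking stress is precisely a Farkas certificate
  of infeasibility of that system. The theorem is therefore the Farkas alternative for equations
  with sign-constrained variables, proved here by Fourier-Motzkin elimination.\<close>

text \<open>A row (a, \<beta>) stands for the inequality \<open>\<Sum>v\<in>X. a v * x v \<le> \<beta>\<close>.\<close>

definition nonneg_comb :: "(('v \<Rightarrow> real) \<times> real) set \<Rightarrow> ('v \<Rightarrow> real) \<times> real \<Rightarrow> bool" where
  "nonneg_comb K y \<longleftrightarrow> (\<exists>l. (\<forall>k\<in>K. 0 \<le> l k) \<and>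
     y = ((\<lambda>v. \<Sum>k\<in>K. l k * fst k v), (\<Sum>k\<in>K. l k * snd k)))"

lemma nonneg_comb_pair:
  assumes "finite K" "p \<in> K" "q \<in> K" "0 \<le> a" "0 \<le> b"
  shows "nonneg_comb K ((\<lambda>v. a * fst p v + b * fst q v), a * snd p + b * snd q)"
proof -
  define l where "l k = (if k = p then a else 0) + (if k = q then b else 0)" for k
  have "(\<Sum>k\<in>K. l k * f k) = a * f p + b * f q" for f
  proof -
    have "(\<Sum>k\<in>K. l k * f k)
        = (\<Sum>k\<in>K. (if k = p then a * f k else 0) + (if k = q then b * f k else 0))"
      by (rule sum.cong) (auto simp: l_def distrib_right)
    then show ?thesis using assms by (simp add: sum.distrib)
  qed
  moreover have "\<forall>k\<in>K. 0 \<le> l k" using assms by (simp add: l_def)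
  ultimately show ?thesis unfolding nonneg_comb_def by (intro exI[of _ l]) auto
qed

lemma nonneg_comb_member: "finite K \<Longrightarrow> p \<in> K \<Longrightarrow> nonneg_comb K p"
  using nonneg_comb_pair[of K p p 1 0] by simp

lemma nonneg_comb_trans:
  assumes "finite K" "\<forall>c\<in>K'. nonneg_comb K c" "nonneg_comb K' y"
  shows "nonneg_comb K y"
proof -
  obtain w where w: "\<forall>c\<in>K'. (\<forall>k\<in>K. 0 \<le> w c k)
      \<and> c = ((\<lambda>v. \<Sum>k\<in>K. w c k * fst k v), (\<Sum>k\<in>K. w c k * snd k))"
    using bchoice[OF assms(2)[unfolded nonneg_comb_def]] by blast
  obtain l where l: "\<forall>c\<in>K'. 0 \<le> l c"
      "y = ((\<lambda>v. \<Sum>c\<in>K'. l c * fst c v), (\<Sum>c\<in>K'. l c * snd c))"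
    using assms(3) unfolding nonneg_comb_def by blast
  define L where "L k = (\<Sum>c\<in>K'. l c * w c k)" for k
  have compose: "(\<Sum>c\<in>K'. l c * (\<Sum>k\<in>K. w c k * f k)) = (\<Sum>k\<in>K. L k * f k)" for f
  proof -
    have "(\<Sum>c\<in>K'. l c * (\<Sum>k\<in>K. w c k * f k)) = (\<Sum>c\<in>K'. \<Sum>k\<in>K. l c * w c k * f k)"
      by (simp add: sum_distrib_left mult.assoc)
    also have "\<dots> = (\<Sum>k\<in>K. \<Sum>c\<in>K'. l c * w c k * f k)" by (rule sum.swap)
    also have "\<dots> = (\<Sum>k\<in>K. L k * f k)" by (simp add: L_def sum_distrib_right)
    finally show ?thesis .
  qed
  have "y = ((\<lambda>v. \<Sum>k\<in>K. L k * fst k v), (\<Sum>k\<in>K. L k * snd k))"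
  proof -
    have "fst c v = (\<Sum>k\<in>K. w c k * fst k v)" "snd c = (\<Sum>k\<in>K. w c k * snd k)"
      if "c \<in> K'" for c v
      using w that by (simp_all add: prod_eq_iff)
    then show ?thesis
      using l(2) compose by (simp cong: sum.cong)
  qed
  moreover have "\<forall>k\<in>K. 0 \<le> L k" using l(1) w unfolding L_def by (simp add: sum_nonneg)
  ultimately show ?thesis unfolding nonneg_comb_def by blast
qed

lemma finite_reals_separated:
  fixes A B :: "real set"
  assumes "finite A" "finite B" "\<forall>a\<in>A. \<forall>b\<in>B. a \<le> b"
  shows "\<exists>t. (\<forall>a\<in>A. a \<le> t) \<and> (\<forall>b\<in>B. t \<le> b)"
proof (cases "A = {}")
  case True
  with assms(2) show ?thesis by (intro exI[of _ "if B = {} then 0 else Min B"]) auto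
next
  case False
  with assms show ?thesis by (intro exI[of _ "Max A"]) auto
qed

definition fm_comb :: "'v \<Rightarrow> ('v \<Rightarrow> real) \<times> real \<Rightarrow> ('v \<Rightarrow> real) \<times> real \<Rightarrow> ('v \<Rightarrow> real) \<times> real" where
  "fm_comb v p q = ((\<lambda>u. - fst q v * fst p u + fst p v * fst q u), - fst q v * snd p + fst p v * snd q)"

definition fm_elim :: "'v \<Rightarrow> (('v \<Rightarrow> real) \<times> real) set \<Rightarrow> (('v \<Rightarrow> real) \<times> real) set" where
  "fm_elim v K = {k\<in>K. fst k v = 0}
     \<union> (\<lambda>(p, q). fm_comb v p q) ` ({p\<in>K. 0 < fst p v} \<times> {q\<in>K. fst q v < 0})"

lemma finite_fm_elim: "finite K \<Longrightarrow> finite (fm_elim v K)"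
  by (simp add: fm_elim_def)

lemma fm_elim_eliminates: "k \<in> fm_elim v K \<Longrightarrow> fst k v = 0"
  by (auto simp: fm_elim_def fm_comb_def)

lemma fm_elim_nonneg_comb:
  assumes "finite K" "k \<in> fm_elim v K"
  shows "nonneg_comb K k"
proof -
  consider "k \<in> K"
    | p q where "p \<in> K" "q \<in> K" "0 < fst p v" "fst q v < 0" "k = fm_comb v p q"
    using assms(2) unfolding fm_elim_def by auto
  then show ?thesis
  proof cases
    case 1
    then show ?thesis by (rule nonneg_comb_member[OF assms(1)])
  next
    case 2
    then show ?thesis
      using nonneg_comb_pair[OF assms(1), of p q "- fst q v" "fst p v"] by (simp add: fm_comb_def)
  qed
qed

lemma fm_comb_bounds:
  fixes x :: "'v \<Rightarrow> real"
  assumes "0 < fst p v" "fst q v < 0"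
    and "(\<Sum>u\<in>X. fst (fm_comb v p q) u * x u) \<le> snd (fm_comb v p q)"
  shows "(snd q - (\<Sum>u\<in>X. fst q u * x u)) / fst q v \<le> (snd p - (\<Sum>u\<in>X. fst p u * x u)) / fst p v"
proof -
  define s where "s k = (\<Sum>u\<in>X. fst k u * x u)" for k :: "('v \<Rightarrow> real) \<times> real"
  have "(\<Sum>u\<in>X. fst (fm_comb v p q) u * x u) = - fst q v * s p + fst p v * s q"
    by (simp add: fm_comb_def s_def left_diff_distrib sum_subtractf sum_distrib_left mult.assoc sum_negf)
  with assms(3) have "- fst q v * s p + fst p v * s q \<le> - fst q v * snd p + fst p v * snd q"
    by (simp add: fm_comb_def)
  with assms(1,2) show ?thesis by (simp add: s_def field_simps)
qed

lemma fm_elim_lift: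
  fixes x :: "'v \<Rightarrow> real"
  assumes "finite K" "finite X" "v \<notin> X"
    and x: "\<forall>k\<in>fm_elim v K. (\<Sum>u\<in>X. fst k u * x u) \<le> snd k"
  shows "\<exists>t. \<forall>k\<in>K. (\<Sum>u\<in>insert v X. fst k u * (x(v := t)) u) \<le> snd k"
proof -
  define s where "s k = (\<Sum>u\<in>X. fst k u * x u)" for k :: "('v \<Rightarrow> real) \<times> real"
  define bound where "bound k = (snd k - s k) / fst k v" for k :: "('v \<Rightarrow> real) \<times> real"
  define Kp where "Kp = {p\<in>K. 0 < fst p v}"
  define Km where "Km = {q\<in>K. fst q v < 0}"
  have "bound q \<le> bound p" if "p \<in> Kp" "q \<in> Km" for p q
  proof -
    have "fm_comb v p q \<in> fm_elim v K" using that by (force simp: fm_elim_def Kp_def Km_def)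
    with x have "(\<Sum>u\<in>X. fst (fm_comb v p q) u * x u) \<le> snd (fm_comb v p q)" by blast
    with that show ?thesis
      unfolding bound_def s_def by (intro fm_comb_bounds) (auto simp: Kp_def Km_def)
  qed
  then obtain t where t: "\<forall>q\<in>Km. bound q \<le> t" "\<forall>p\<in>Kp. t \<le> bound p"
    using finite_reals_separated[of "bound ` Km" "bound ` Kp"] assms(1)
    by (force simp: Kp_def Km_def)
  have "(\<Sum>u\<in>insert v X. fst k u * (x(v := t)) u) \<le> snd k" if "k \<in> K" for k
  proof -
    have "(\<Sum>u\<in>X. fst k u * (x(v := t)) u) = s k"
      unfolding s_def using assms(3) by (intro sum.cong) auto
    then have "(\<Sum>u\<in>insert v X. fst k u * (x(v := t)) u) = fst k v * t + s k"
      using assms(2,3) by simp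
    moreover consider "fst k v = 0" | "0 < fst k v" | "fst k v < 0" by linarith
    then have "fst k v * t + s k \<le> snd k"
    proof cases
      case 1
      then have "k \<in> fm_elim v K" using that by (simp add: fm_elim_def)
      then show ?thesis using x 1 by (simp add: s_def)
    next
      case 2
      then have "k \<in> Kp" using that by (simp add: Kp_def)
      then have "t \<le> (snd k - s k) / fst k v" using t(2) by (simp add: bound_def)
      then show ?thesis using 2 by (simp add: pos_le_divide_eq mult.commute)
    next
      case 3
      then have "k \<in> Km" using that by (simp add: Km_def)
      then have "(snd k - s k) / fst k v \<le> t" using t(1) by (simp add: bound_def)
      then show ?thesis using 3 by (simp add: neg_divide_le_eq mult.commute)
    qed
    ultimately show ?thesis by simp
  qed
  then show ?thesis by blast
qed

lemma fourier_motzkin: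
  assumes "finite X" "finite K" "\<nexists>x. \<forall>k\<in>K. (\<Sum>v\<in>X. fst k v * x v) \<le> snd k"
  shows "\<exists>y. nonneg_comb K y \<and> (\<forall>v\<in>X. fst y v = 0) \<and> snd y < 0"
  using assms
proof (induction X arbitrary: K rule: finite_induct)
  case empty
  then obtain k where "k \<in> K" "snd k < 0" by (auto simp: not_le)
  then show ?case using nonneg_comb_member[OF empty.prems(1)] by blast
next
  case (insert v X)
  have "\<nexists>x. \<forall>k\<in>fm_elim v K. (\<Sum>u\<in>X. fst k u * x u) \<le> snd k"
    using fm_elim_lift[OF insert.prems(1) insert.hyps(1,2)] insert.prems(2) by blast
  then obtain y where y: "nonneg_comb (fm_elim v K) y" "\<forall>u\<in>X. fst y u = 0" "snd y < 0"
    using insert.IH finite_fm_elim[OF insert.prems(1)] by blast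
  have "fst y v = 0"
    using y(1) fm_elim_eliminates[of _ v K] by (auto simp: nonneg_comb_def intro!: sum.neutral)
  moreover have "nonneg_comb K y"
    using nonneg_comb_trans[OF insert.prems(1) _ y(1)] fm_elim_nonneg_comb[OF insert.prems(1)] by blast
  ultimately show ?case using y(2,3) by (intro exI[of _ y]) auto
qed

lemma farkas:
  fixes A :: "'i \<Rightarrow> 'v \<Rightarrow> real" and b :: "'i \<Rightarrow> real"
  assumes "finite X" "finite I" "\<nexists>x. \<forall>t\<in>I. (\<Sum>v\<in>X. A t v * x v) \<le> b t"
  shows "\<exists>L. (\<forall>t\<in>I. 0 \<le> L t) \<and> (\<forall>v\<in>X. (\<Sum>t\<in>I. L t * A t v) = 0) \<and> (\<Sum>t\<in>I. L t * b t) < 0"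
proof -
  define g where "g t = (A t, b t)" for t
  have "\<nexists>x. \<forall>k\<in>g ` I. (\<Sum>v\<in>X. fst k v * x v) \<le> snd k" using assms(3) by (simp add: g_def)
  then obtain y where y: "nonneg_comb (g ` I) y" "\<forall>v\<in>X. fst y v = 0" "snd y < 0"
    using fourier_motzkin[OF assms(1)] assms(2) by blast
  then obtain l where l: "\<forall>k\<in>g ` I. 0 \<le> l k"
      "y = ((\<lambda>v. \<Sum>k\<in>g ` I. l k * fst k v), (\<Sum>k\<in>g ` I. l k * snd k))"
    unfolding nonneg_comb_def by blast
  \<comment> \<open>indices with equal rows share that row's coefficient equally\<close>
  define c where "c t = card {s\<in>I. g s = g t}" for t
  define L where "L t = l (g t) / c t" for t
  have spread: "(\<Sum>t\<in>I. L t * h (g t)) = (\<Sum>k\<in>g ` I. l k * h k)" for h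
  proof -
    have "(\<Sum>t\<in>{s\<in>I. g s = k}. L t * h (g t)) = l k * h k" if "k \<in> g ` I" for k
    proof -
      obtain t0 where t0: "t0 \<in> I" "k = g t0" using \<open>k \<in> g ` I\<close> by blast
      then have "0 < c t0" using assms(2) by (auto simp: c_def card_gt_0_iff)
      have "(\<Sum>t\<in>{s\<in>I. g s = k}. L t * h (g t)) = (\<Sum>t\<in>{s\<in>I. g s = k}. l k * h k / c t0)"
        by (rule sum.cong) (auto simp: L_def c_def t0)
      also have "\<dots> = l k * h k"
        using \<open>0 < c t0\<close> by (simp add: c_def t0)
      finally show ?thesis .
    qed
    then show ?thesis by (simp add: sum.image_gen[OF assms(2), of _ g])
  qed
  have "\<forall>t\<in>I. 0 \<le> L t" using l(1) by (simp add: L_def)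
  moreover have "(\<Sum>t\<in>I. L t * A t v) = fst y v" for v
    using spread[of "\<lambda>k. fst k v"] l(2) by (simp add: g_def)
  moreover have "(\<Sum>t\<in>I. L t * b t) = snd y"
    using spread[of snd] l(2) by (simp add: g_def)
  ultimately show ?thesis using y(2,3) by (intro exI[of _ L]) auto
qed

definition solvable_with_signs :: "'v set \<Rightarrow> 'e set \<Rightarrow> ('e \<Rightarrow> 'v \<Rightarrow> real) \<Rightarrow> ('e \<Rightarrow> real)
    \<Rightarrow> 'v set \<Rightarrow> 'v set \<Rightarrow> bool" where
  "solvable_with_signs X E A b P M \<longleftrightarrow> (\<exists>x. (\<forall>e\<in>E. (\<Sum>v\<in>X. A e v * x v) = b e)
     \<and> (\<forall>v\<in>P. 0 \<le> x v) \<and> (\<forall>v\<in>M. x v \<le> 0))"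

definition sign_certificate :: "'v set \<Rightarrow> 'e set \<Rightarrow> ('e \<Rightarrow> 'v \<Rightarrow> real) \<Rightarrow> ('e \<Rightarrow> real)
    \<Rightarrow> 'v set \<Rightarrow> 'v set \<Rightarrow> ('e \<Rightarrow> real) \<Rightarrow> bool" where
  "sign_certificate X E A b P M \<omega> \<longleftrightarrow>
     (\<forall>v\<in>P - M. 0 \<le> (\<Sum>e\<in>E. \<omega> e * A e v)) \<and> (\<forall>v\<in>M - P. (\<Sum>e\<in>E. \<omega> e * A e v) \<le> 0)
     \<and> (\<forall>v\<in>X - (P \<union> M). (\<Sum>e\<in>E. \<omega> e * A e v) = 0) \<and> (\<Sum>e\<in>E. \<omega> e * b e) < 0"

lemma sign_certificate_excludes_solution:
  assumes "sign_certificate X E A b P M \<omega>" "solvable_with_signs X E A b P M"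
  shows False
proof -
  obtain x where x: "\<forall>e\<in>E. (\<Sum>v\<in>X. A e v * x v) = b e" "\<forall>v\<in>P. 0 \<le> x v" "\<forall>v\<in>M. x v \<le> 0"
    using assms(2) unfolding solvable_with_signs_def by blast
  define c where "c v = (\<Sum>e\<in>E. \<omega> e * A e v)" for v
  have "(\<Sum>e\<in>E. \<omega> e * b e) = (\<Sum>e\<in>E. \<omega> e * (\<Sum>v\<in>X. A e v * x v))"
    by (intro sum.cong) (simp_all add: x(1))
  also have "\<dots> = (\<Sum>e\<in>E. \<Sum>v\<in>X. \<omega> e * (A e v * x v))" by (simp add: sum_distrib_left)
  also have "\<dots> = (\<Sum>v\<in>X. \<Sum>e\<in>E. \<omega> e * (A e v * x v))" by (rule sum.swap)
  also have "\<dots> = (\<Sum>v\<in>X. c v * x v)" by (simp add: c_def sum_distrib_right mult.assoc)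
  also have "\<dots> \<ge> 0"
  proof (rule sum_nonneg)
    fix v assume "v \<in> X"
    then consider "v \<in> P - M" | "v \<in> M - P" | "v \<in> P \<inter> M" | "v \<in> X - (P \<union> M)" by blast
    then show "0 \<le> c v * x v"
    proof cases
      case 1
      then show ?thesis using assms(1) x(2) by (simp add: sign_certificate_def c_def)
    next
      case 2
      then show ?thesis using assms(1) x(3) by (simp add: sign_certificate_def c_def mult_nonpos_nonpos)
    next
      case 3
      then have "x v = 0" using x(2,3) by (intro order.antisym) auto
      then show ?thesis by simp
    next
      case 4
      then show ?thesis using assms(1) by (simp add: sign_certificate_def c_def)
    qed
  qed
  finally show False using assms(1) by (simp add: sign_certificate_def)
qed

lemma sum_indicator_mult:
  fixes f :: "'b \<Rightarrow> 'a::semiring_0"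
  shows "finite S \<Longrightarrow> (\<Sum>v\<in>S. (if v = u then c else 0) * f v) = (if u \<in> S then c * f u else 0)"
  by (induction S rule: finite_induct) auto

lemma sum_mult_indicator:
  fixes f :: "'b \<Rightarrow> 'a::semiring_0"
  shows "finite S \<Longrightarrow> (\<Sum>v\<in>S. f v * (if u = v then c else 0)) = (if u \<in> S then f u * c else 0)"
  by (induction S rule: finite_induct) auto

text \<open>The system of \<^const>\<open>solvable_with_signs\<close> as a system of inequalities: each equation
  becomes two inequalities, each sign constraint one.\<close>

definition sign_rows :: "('e \<Rightarrow> 'v \<Rightarrow> real) \<Rightarrow> ('e + 'e) + ('v + 'v) \<Rightarrow> 'v \<Rightarrow> real" where
  "sign_rows A t = (case t of Inl (Inl e) \<Rightarrow> A e | Inl (Inr e) \<Rightarrow> (\<lambda>v. - A e v)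
     | Inr (Inl u) \<Rightarrow> (\<lambda>v. if v = u then -1 else 0) | Inr (Inr u) \<Rightarrow> (\<lambda>v. if v = u then 1 else 0))"

definition sign_rhs :: "('e \<Rightarrow> real) \<Rightarrow> ('e + 'e) + ('v + 'v) \<Rightarrow> real" where
  "sign_rhs b t = (case t of Inl (Inl e) \<Rightarrow> b e | Inl (Inr e) \<Rightarrow> - b e | Inr _ \<Rightarrow> 0)"

lemma solvable_with_signs_if_sign_rows:
  assumes "finite X" "P \<subseteq> X" "M \<subseteq> X"
    and x: "\<forall>t\<in>(E <+> E) <+> (P <+> M). (\<Sum>v\<in>X. sign_rows A t v * x v) \<le> sign_rhs b t"
  shows "solvable_with_signs X E A b P M"
proof -
  have "(\<Sum>v\<in>X. A e v * x v) = b e" if "e \<in> E" for e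
  proof -
    have "Inl (Inl e) \<in> (E <+> E) <+> (P <+> M)" "Inl (Inr e) \<in> (E <+> E) <+> (P <+> M)"
      using that by blast+
    from this[THEN bspec[OF x]] show ?thesis by (simp add: sign_rows_def sign_rhs_def sum_negf)
  qed
  moreover have "0 \<le> x u" if "u \<in> P" for u
  proof -
    have "Inr (Inl u) \<in> (E <+> E) <+> (P <+> M)" using that by blast
    from bspec[OF x this] show ?thesis
      using that assms(2) by (auto simp: sign_rows_def sign_rhs_def sum_indicator_mult assms(1))
  qed
  moreover have "x u \<le> 0" if "u \<in> M" for u
  proof -
    have "Inr (Inr u) \<in> (E <+> E) <+> (P <+> M)" using that by blast
    from bspec[OF x this] show ?thesis
      using that assms(3) by (auto simp: sign_rows_def sign_rhs_def sum_indicator_mult assms(1))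
  qed
  ultimately show ?thesis unfolding solvable_with_signs_def by blast
qed

lemma sum_sign_rows:
  assumes "finite E" "finite P" "finite M"
  shows "(\<Sum>t\<in>(E <+> E) <+> (P <+> M). L t * sign_rows A t v)
      = (\<Sum>e\<in>E. (L (Inl (Inl e)) - L (Inl (Inr e))) * A e v)
        - (if v \<in> P then L (Inr (Inl v)) else 0) + (if v \<in> M then L (Inr (Inr v)) else 0)"
    and "(\<Sum>t\<in>(E <+> E) <+> (P <+> M). L t * sign_rhs b t)
      = (\<Sum>e\<in>E. (L (Inl (Inl e)) - L (Inl (Inr e))) * b e)"
  using assms
  by (simp_all add: sum.Plus sign_rows_def sign_rhs_def left_diff_distrib sum_subtractf sum_negf
      sum_mult_indicator)

lemma sign_certificate_if_unsolvable:
  fixes A :: "'e \<Rightarrow> 'v \<Rightarrow> real"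
  assumes "finite X" "finite E" "P \<subseteq> X" "M \<subseteq> X" "\<not> solvable_with_signs X E A b P M"
  shows "\<exists>\<omega>. sign_certificate X E A b P M \<omega>"
proof -
  define I where "I = (E <+> E) <+> (P <+> M)"
  have fin: "finite P" "finite M" using assms(1,3,4) finite_subset by auto
  then have "finite I" using assms(2) by (simp add: I_def)
  moreover have "\<nexists>x. \<forall>t\<in>I. (\<Sum>v\<in>X. sign_rows A t v * x v) \<le> sign_rhs b t"
    using solvable_with_signs_if_sign_rows[OF assms(1,3,4)] assms(5) unfolding I_def by blast
  ultimately obtain L where L: "\<forall>t\<in>I. 0 \<le> L t" "\<forall>v\<in>X. (\<Sum>t\<in>I. L t * sign_rows A t v) = 0"
      "(\<Sum>t\<in>I. L t * sign_rhs b t) < 0"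
    using farkas[OF assms(1)] by blast
  define \<omega> where "\<omega> e = L (Inl (Inl e)) - L (Inl (Inr e))" for e
  define c where "c v = (\<Sum>e\<in>E. \<omega> e * A e v)" for v
  have col: "c v - (if v \<in> P then L (Inr (Inl v)) else 0) + (if v \<in> M then L (Inr (Inr v)) else 0) = 0"
    if "v \<in> X" for v
    using L(2) that sum_sign_rows(1)[OF assms(2) fin, of L A v] by (simp add: I_def c_def \<omega>_def)
  have nonneg_P: "0 \<le> L (Inr (Inl v))" if "v \<in> P" for v
    using L(1) that unfolding I_def by blast
  have nonneg_M: "0 \<le> L (Inr (Inr v))" if "v \<in> M" for v
    using L(1) that unfolding I_def by blast
  have "sign_certificate X E A b P M \<omega>"
    unfolding sign_certificate_def c_def[symmetric]
  proof (intro conjI ballI)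
    fix v assume "v \<in> P - M"
    then show "0 \<le> c v" using col[of v] nonneg_P[of v] assms(3) by auto
  next
    fix v assume "v \<in> M - P"
    then show "c v \<le> 0" using col[of v] nonneg_M[of v] assms(4) by auto
  next
    fix v assume "v \<in> X - (P \<union> M)"
    then show "c v = 0" using col[of v] by auto
  next
    show "(\<Sum>e\<in>E. \<omega> e * b e) < 0"
      using L(3) sum_sign_rows(2)[OF assms(2) fin, of L b] by (simp add: I_def \<omega>_def)
  qed
  then show ?thesis by blast
qed

theorem farkas_signs:
  assumes "finite X" "finite E" "P \<subseteq> X" "M \<subseteq> X"
  shows "solvable_with_signs X E A b P M \<longleftrightarrow> (\<nexists>\<omega>. sign_certificate X E A b P M \<omega>)"
  using sign_certificate_excludes_solution sign_certificate_if_unsolvable[OF assms] by blast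

lemma finite_edges: "simple_graph n E \<Longrightarrow> finite E"
  using finite_subset[of E "{1..n} \<times> {1..n}"] by (auto simp: simple_graph_def)

lemma sum_incident_edges:
  assumes "finite E" "\<forall>i j. (i, j) \<in> E \<longrightarrow> (j, i) \<notin> E"
  shows "(\<Sum>e\<in>E. (if fst e = m then F (w e) (snd e) else 0) + (if snd e = m then F (w e) (fst e) else 0))
     = (\<Sum>j\<in>nbrs E m. F (edge_weight E w m j) j)"
proof -
  define Out where "Out = {j. (m, j) \<in> E}"
  define In where "In = {j. (j, m) \<in> E}"
  have "Out \<subseteq> snd ` E" "In \<subseteq> fst ` E" by (force simp: Out_def In_def)+
  then have fin: "finite Out" "finite In" using assms(1) finite_subset by blast+
  have "(\<Sum>e\<in>E. if fst e = m then F (w e) (snd e) else 0) = (\<Sum>e\<in>{e\<in>E. fst e = m}. F (w e) (snd e))"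
    using assms(1) by (simp add: sum.inter_filter)
  also have "{e\<in>E. fst e = m} = Pair m ` Out" by (force simp: Out_def)
  also have "(\<Sum>e\<in>Pair m ` Out. F (w e) (snd e)) = (\<Sum>j\<in>Out. F (w (m, j)) j)"
    by (simp add: sum.reindex inj_on_def)
  also have "\<dots> = (\<Sum>j\<in>Out. F (edge_weight E w m j) j)"
    by (intro sum.cong) (auto simp: Out_def edge_weight_def)
  finally have out: "(\<Sum>e\<in>E. if fst e = m then F (w e) (snd e) else 0) = \<dots>" .
  have "(\<Sum>e\<in>E. if snd e = m then F (w e) (fst e) else 0) = (\<Sum>e\<in>{e\<in>E. snd e = m}. F (w e) (fst e))"
    using assms(1) by (simp add: sum.inter_filter)
  also have "{e\<in>E. snd e = m} = (\<lambda>j. (j, m)) ` In" by (force simp: In_def)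
  also have "(\<Sum>e\<in>(\<lambda>j. (j, m)) ` In. F (w e) (fst e)) = (\<Sum>j\<in>In. F (w (j, m)) j)"
    by (simp add: sum.reindex inj_on_def)
  also have "\<dots> = (\<Sum>j\<in>In. F (edge_weight E w m j) j)"
    using assms(2) by (intro sum.cong) (auto simp: In_def edge_weight_def)
  finally have in_: "(\<Sum>e\<in>E. if snd e = m then F (w e) (fst e) else 0) = \<dots>" .
  have "nbrs E m = Out \<union> In" "Out \<inter> In = {}"
    using assms(2) by (auto simp: nbrs_def adj_def Out_def In_def)
  then show ?thesis using out in_ fin by (simp add: sum.distrib sum.union_disjoint)
qed

datatype disc_coord = X_coord | Y_coord | R_coord

lemma UNIV_disc_coord: "(UNIV :: disc_coord set) = {X_coord, Y_coord, R_coord}"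
  using disc_coord.exhaust by auto

definition disc_coords :: "(nat \<Rightarrow> complex) \<Rightarrow> (nat \<Rightarrow> real) \<Rightarrow> nat \<times> disc_coord \<Rightarrow> real" where
  "disc_coords w s u = (case snd u of X_coord \<Rightarrow> Re (w (fst u)) | Y_coord \<Rightarrow> Im (w (fst u))
     | R_coord \<Rightarrow> s (fst u))"

lemma disc_coords_eta:
  "disc_coords (\<lambda>m. Complex (x (m, X_coord)) (x (m, Y_coord))) (\<lambda>m. x (m, R_coord)) = x"
proof
  fix u :: "nat \<times> disc_coord"
  obtain m c where u: "u = (m, c)" by (cases u)
  show "disc_coords (\<lambda>m. Complex (x (m, X_coord)) (x (m, Y_coord))) (\<lambda>m. x (m, R_coord)) u = x u"
    unfolding u by (cases c) (simp_all add: disc_coords_def)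
qed

lemma ex_disc_coords: "(\<exists>x. Q x) \<longleftrightarrow> (\<exists>w s. Q (disc_coords w s))"
proof
  assume "\<exists>x. Q x"
  then obtain x where "Q x" ..
  then have "Q (disc_coords (\<lambda>m. Complex (x (m, X_coord)) (x (m, Y_coord))) (\<lambda>m. x (m, R_coord)))"
    by (simp only: disc_coords_eta)
  then show "\<exists>w s. Q (disc_coords w s)" by blast
qed blast

definition endpoint_coeff :: "(nat \<Rightarrow> complex) \<Rightarrow> (nat \<Rightarrow> real) \<Rightarrow> nat \<Rightarrow> nat \<Rightarrow> disc_coord \<Rightarrow> real" where
  "endpoint_coeff z r i j c = (case c of X_coord \<Rightarrow> Re (z i - z j) | Y_coord \<Rightarrow> Im (z i - z j)
     | R_coord \<Rightarrow> - (r i + r j))"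

definition edge_row :: "(nat \<Rightarrow> complex) \<Rightarrow> (nat \<Rightarrow> real) \<Rightarrow> nat \<times> nat \<Rightarrow> nat \<times> disc_coord \<Rightarrow> real" where
  "edge_row z r e u = (if fst u = fst e then endpoint_coeff z r (fst e) (snd e) (snd u) else 0)
     + (if fst u = snd e then endpoint_coeff z r (snd e) (fst e) (snd u) else 0)"

lemma sum_edge_row:
  assumes "i \<in> {1..n}" "j \<in> {1..n}" "i \<noteq> j"
  shows "(\<Sum>u\<in>{1..n} \<times> UNIV. edge_row z r (i, j) u * disc_coords w s u)
    = dot2 (z i - z j) (w i - w j) - (r i + r j) * (s i + s j)"
proof -
  define G where "G a b = (\<Sum>c\<in>UNIV. endpoint_coeff z r a b c * disc_coords w s (a, c))" for a b
  have "(\<Sum>u\<in>{1..n} \<times> UNIV. edge_row z r (i, j) u * disc_coords w s u)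
      = (\<Sum>m\<in>{1..n}. \<Sum>c\<in>UNIV. edge_row z r (i, j) (m, c) * disc_coords w s (m, c))"
    by (simp add: sum.cartesian_product)
  also have "\<dots> = (\<Sum>m\<in>{1..n}. (if m = i then G i j else 0) + (if m = j then G j i else 0))"
    using assms(3) by (intro sum.cong refl) (auto simp: edge_row_def G_def)
  also have "\<dots> = G i j + G j i" using assms by (simp add: sum.distrib)
  also have "\<dots> = dot2 (z i - z j) (w i - w j) - (r i + r j) * (s i + s j)"
    by (simp add: G_def UNIV_disc_coord endpoint_coeff_def disc_coords_def dot2_def algebra_simps)
  finally show ?thesis .
qed

lemma edge_row_columns:
  assumes "finite E" "\<forall>i j. (i, j) \<in> E \<longrightarrow> (j, i) \<notin> E"
  shows "(\<Sum>e\<in>E. \<omega> e * edge_row z r e (m, X_coord))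
      = Re (\<Sum>j\<in>nbrs E m. complex_of_real (edge_weight E \<omega> m j) * (z m - z j))"
    and "(\<Sum>e\<in>E. \<omega> e * edge_row z r e (m, Y_coord))
      = Im (\<Sum>j\<in>nbrs E m. complex_of_real (edge_weight E \<omega> m j) * (z m - z j))"
    and "(\<Sum>e\<in>E. \<omega> e * edge_row z r e (m, R_coord)) = - radial_sum E r \<omega> m"
proof -
  have col: "(\<Sum>e\<in>E. \<omega> e * edge_row z r e (m, c))
      = (\<Sum>j\<in>nbrs E m. edge_weight E \<omega> m j * endpoint_coeff z r m j c)" for c
  proof -
    have "(\<Sum>e\<in>E. \<omega> e * edge_row z r e (m, c))
        = (\<Sum>e\<in>E. (if fst e = m then \<omega> e * endpoint_coeff z r m (snd e) c else 0)
            + (if snd e = m then \<omega> e * endpoint_coeff z r m (fst e) c else 0))"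
      by (intro sum.cong) (auto simp: edge_row_def distrib_left)
    then show ?thesis
      using sum_incident_edges[OF assms, of m "\<lambda>a j. a * endpoint_coeff z r m j c" \<omega>] by simp
  qed
  show "(\<Sum>e\<in>E. \<omega> e * edge_row z r e (m, X_coord))
      = Re (\<Sum>j\<in>nbrs E m. complex_of_real (edge_weight E \<omega> m j) * (z m - z j))"
    "(\<Sum>e\<in>E. \<omega> e * edge_row z r e (m, Y_coord))
      = Im (\<Sum>j\<in>nbrs E m. complex_of_real (edge_weight E \<omega> m j) * (z m - z j))"
    by (simp_all add: col endpoint_coeff_def Re_sum Im_sum)
  show "(\<Sum>e\<in>E. \<omega> e * edge_row z r e (m, R_coord)) = - radial_sum E r \<omega> m"
    by (simp add: col endpoint_coeff_def radial_sum_def algebra_simps flip: sum_negf)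
qed

definition edge_defect :: "(nat \<Rightarrow> complex) \<Rightarrow> (nat \<Rightarrow> real) \<Rightarrow> nat \<times> nat \<Rightarrow> real" where
  "edge_defect z' r' e = (r' (fst e) + r' (snd e))^2 - dot2 (z' (fst e) - z' (snd e)) (z' (fst e) - z' (snd e))"

lemma extendable_iff_solvable_with_signs:
  assumes "simple_graph n E"
  shows "extendable n E Vp Vm Veq z r z' r' \<longleftrightarrow>
    solvable_with_signs ({1..n} \<times> UNIV) E (edge_row z r) (edge_defect z' r')
      (({i\<in>Vp. r' i = 0} \<union> Veq) \<times> {R_coord}) (({i\<in>Vm. r' i = 0} \<union> Veq) \<times> {R_coord})"
proof -
  have edge: "(\<Sum>u\<in>{1..n} \<times> UNIV. edge_row z r (i, j) u * disc_coords w s u) = edge_defect z' r' (i, j)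
      \<longleftrightarrow> dot2 (z i - z j) (w i - w j) - (r i + r j) * (s i + s j)
          = (r' i + r' j)^2 - dot2 (z' i - z' j) (z' i - z' j)"
    if "(i, j) \<in> E" for i j w s
  proof -
    have "i \<in> {1..n}" "j \<in> {1..n}" "i \<noteq> j"
      using assms that unfolding simple_graph_def by auto
    then have "(\<Sum>u\<in>{1..n} \<times> UNIV. edge_row z r (i, j) u * disc_coords w s u)
        = dot2 (z i - z j) (w i - w j) - (r i + r j) * (s i + s j)"
      by (rule sum_edge_row)
    then show ?thesis by (simp add: edge_defect_def)
  qed
  have edges: "(\<forall>e\<in>E. (\<Sum>u\<in>{1..n} \<times> UNIV. edge_row z r e u * disc_coords w s u) = edge_defect z' r' e)
      \<longleftrightarrow> (\<forall>(i, j)\<in>E. dot2 (z i - z j) (w i - w j) - (r i + r j) * (s i + s j)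
          = (r' i + r' j)^2 - dot2 (z' i - z' j) (z' i - z' j))" for w s
    using edge by auto
  have signs: "(\<forall>u\<in>(A \<union> C) \<times> {R_coord}. 0 \<le> disc_coords w s u)
      \<and> (\<forall>u\<in>(B \<union> C) \<times> {R_coord}. disc_coords w s u \<le> 0) \<longleftrightarrow> proper_signs A B C s"
    for A B C w s
    by (auto simp: proper_signs_def disc_coords_def intro: order.antisym)
  show ?thesis
    unfolding solvable_with_signs_def ex_disc_coords extendable_def edges signs ..
qed

lemma blocks_iff_sign_certificate:
  assumes "simple_graph n E" "vpartition n Vp Vm Veq V0"
  shows "blocks n E Vp Vm Veq z r z' r' \<omega> \<longleftrightarrow>
    sign_certificate ({1..n} \<times> UNIV) E (edge_row z r) (edge_defect z' r')
      (({i\<in>Vp. r' i = 0} \<union> Veq) \<times> {R_coord}) (({i\<in>Vm. r' i = 0} \<union> Veq) \<times> {R_coord}) \<omega>"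
proof -
  define tVp where "tVp = {i\<in>Vp. r' i = 0}"
  define tVm where "tVm = {i\<in>Vm. r' i = 0}"
  define tV0 where "tV0 = {1..n} - (tVp \<union> tVm \<union> Veq)"
  define col where "col u = (\<Sum>e\<in>E. \<omega> e * edge_row z r e u)" for u
  have finE: "finite E" using assms(1) by (rule finite_edges)
  have norev: "\<forall>i j. (i, j) \<in> E \<longrightarrow> (j, i) \<notin> E" using assms(1) by (simp add: simple_graph_def)
  have parts: "(tVp \<union> Veq) \<times> {R_coord} - (tVm \<union> Veq) \<times> {R_coord} = tVp \<times> {R_coord}"
    "(tVm \<union> Veq) \<times> {R_coord} - (tVp \<union> Veq) \<times> {R_coord} = tVm \<times> {R_coord}"
    "{1..n} \<times> UNIV - ((tVp \<union> Veq) \<times> {R_coord} \<union> (tVm \<union> Veq) \<times> {R_coord})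
       = {1..n} \<times> {X_coord, Y_coord} \<union> tV0 \<times> {R_coord}"
    using assms(2) by (auto simp: vpartition_def tVp_def tVm_def tV0_def UNIV_disc_coord)
  have equilibrium: "equilibrium_stress n E z \<omega> \<longleftrightarrow>
      (\<forall>m\<in>{1..n}. col (m, X_coord) = 0 \<and> col (m, Y_coord) = 0)"
    by (simp add: equilibrium_stress_def col_def edge_row_columns[OF finE norev] complex_eq_iff)
  have radial: "col (m, R_coord) = - radial_sum E r \<omega> m" for m
    by (simp add: col_def edge_row_columns[OF finE norev])
  have total: "(\<Sum>(i, j)\<in>E. \<omega> (i, j) * (dot2 (z' i - z' j) (z' i - z' j) - (r' i + r' j)^2))
      = - (\<Sum>e\<in>E. \<omega> e * edge_defect z' r' e)"
  proof -
    have "(\<Sum>(i, j)\<in>E. \<omega> (i, j) * (dot2 (z' i - z' j) (z' i - z' j) - (r' i + r' j)^2))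
        = (\<Sum>e\<in>E. - (\<omega> e * edge_defect z' r' e))"
      by (intro sum.cong refl) (simp add: edge_defect_def algebra_simps split: prod.split)
    then show ?thesis by (simp add: sum_negf)
  qed
  have free: "(\<forall>u\<in>{1..n} \<times> {X_coord, Y_coord} \<union> tV0 \<times> {R_coord}. col u = 0) \<longleftrightarrow>
      equilibrium_stress n E z \<omega> \<and> (\<forall>m\<in>tV0. radial_sum E r \<omega> m = 0)"
    unfolding equilibrium ball_Un split_paired_Ball_Sigma by (auto simp: radial)
  show ?thesis
    unfolding blocks_def Let_def sign_certificate_def tVp_def[symmetric] tVm_def[symmetric]
      tV0_def[symmetric] col_def[symmetric] parts free total
    by (auto simp: radial)
qed

theorem mainTheorem9:
  fixes n :: nat and E :: "(nat \<times> nat) set" and rot :: "nat \<Rightarrow> nat list"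
    and z z' :: "nat \<Rightarrow> complex" and r r' :: "nat \<Rightarrow> real"
    and Vp Vm Veq V0 :: "nat set"
  assumes "planar_embedded n E rot"
    and "packing n E rot z r"
    and "vpartition n Vp Vm Veq V0"
    and "inf_flex E z r z' r'"
    and "proper_signs Vp Vm Veq r'"
    and "\<not> trivial_flex n z z' r'"
  shows "extendable n E Vp Vm Veq z r z' r' \<longleftrightarrow> \<not> (\<exists>\<omega>. blocks n E Vp Vm Veq z r z' r' \<omega>)"
proof -
  let ?X = "{1..n} \<times> (UNIV :: disc_coord set)"
  let ?P = "({i\<in>Vp. r' i = 0} \<union> Veq) \<times> {R_coord}"
  let ?M = "({i\<in>Vm. r' i = 0} \<union> Veq) \<times> {R_coord}"
  have graph: "simple_graph n E" using assms(1) by (simp add: planar_embedded_def)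
  then have "finite E" by (rule finite_edges)
  have "finite ?X" by (simp add: UNIV_disc_coord)
  have "?P \<subseteq> ?X" "?M \<subseteq> ?X" using assms(3) by (auto simp: vpartition_def)
  have "extendable n E Vp Vm Veq z r z' r'
      \<longleftrightarrow> solvable_with_signs ?X E (edge_row z r) (edge_defect z' r') ?P ?M"
    by (rule extendable_iff_solvable_with_signs[OF graph])
  also have "\<dots> \<longleftrightarrow> (\<nexists>\<omega>. sign_certificate ?X E (edge_row z r) (edge_defect z' r') ?P ?M \<omega>)"
    by (rule farkas_signs) fact+
  also have "\<dots> \<longleftrightarrow> \<not> (\<exists>\<omega>. blocks n E Vp Vm Veq z r z' r' \<omega>)"
    by (simp add: blocks_iff_sign_certificate[OF graph assms(3)])
  finally show ?thesis .
qed

end
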